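(* Let $\theta\in[0,\frac\pi2]$ and let $\Omega_\theta\subset\mathbb{R}^2$ be a simply connected open set on which $\cos\theta\cosh u+\sin\theta\cos v\neq0$ (e.g. $\Omega_\theta=\mathbb{R}^2$ for $\theta\in[0,\frac\pi4)$). Define on $\Omega_\theta$, with $z=u+iv$, $$h(z)=e^{iz},\quad \mathcal{M}_\theta=\cos\theta\,\sinh u\sin u-\sin\theta\,\cos u\cos v,\quad \mathcal{N}_\theta=e^{v}\left(\cos\theta\cosh u+\sin\theta\sin v\right).$$ Then: (i) $(h,\mathcal{M}_\theta,\mathcal{N}_\theta)$ is a Weierstrass data of the second kind on $\Omega_\theta$; (ii) the map $\mathbf{X}_\theta:=\cos\theta\,\mathbf{X}_0+\sin\theta\,\mathbf{X}_{\pi/2}$, where $$\mathbf{X}_0(u,v)=(\sinh u\sin u,\ \sinh u\cos u,\ \cosh u\sinh v,\ \cosh u\cosh v)^T,\quad \mathbf{X}_{\pi/2}(u,v)=(-\cos u\cos v,\ \sin u\cos v,\ \cosh v\sin v,\ \sinh v\sin v)^T,$$ satisfies $(\mathbf{X}_\theta)_z=(\mathcal{M}_\theta)_z(1,-i,-h,h)^T+(\mathcal{N}_\theta)_z\big(0,ih,\tfrac12(1+h^2),\tfrac12(1-h^2)\big)^T$, and is a conformal spacelike immersion of $\Omega_\theta$ into $\mathbb{L}^4$ with induced metric $(\cos\theta\cosh u+\sin\theta\cos v)^2(du^2+dv^2)$; (iii) the mean curvature vector of $\mathbf{X}_\theta$ is null and vanishes nowhere on $\Omega_\theta$; (iv)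 $\mathbf{X}_\theta(\Omega_\theta)$ lies in the hypersurface $x_1^2+x_2^2+x_3^2-x_4^2=-\cos(2\theta)$.
   Context: $z=u+iv$, $\partial_z=\frac12(\partial_u-i\partial_v)$, $\partial_{\overline z}=\frac12(\partial_u+i\partial_v)$. $\mathbb{L}^4$ is $\mathbb{R}^4$ with the Lorentzian metric $\langle x,y\rangle=x_1y_1+x_2y_2+x_3y_3-x_4y_4$. For a conformal spacelike immersion $\mathbf{X}$ with induced metric $\Lambda(du^2+dv^2)$, the mean curvature vector is $\mathbf{H}=\frac{1}{\Lambda}(\mathbf{X}_{uu}+\mathbf{X}_{vv})$. A Weierstrass data of the second kind on $\Omega$ is a triple $(h,\mathcal{M},\mathcal{N})$ where $h:\Omega\to\mathbb{C}\setminus\{0\}$ and $\mathcal{M},\mathcal{N}:\Omega\to\mathbb{R}$ are $\mathcal{C}^2$, satisfying $h_{\overline z}=0$, $\mathcal{M}_{z\overline z}=(\mathrm{Re}\,h)\,\mathcal{N}_{z\overline z}$, and $\mathcal{M}_z-(\mathrm{Re}\,h)\,\mathcal{N}_z\neq0$ at every point of $\Omega$. *)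

theory Defs
  imports "HOL-Analysis.Analysis"
begin

text \<open>Points of the domain are written as complex numbers z = u + i v, u = Re z, v = Im z.\<close>

definition pu :: "(complex \<Rightarrow> 'a::real_normed_vector) \<Rightarrow> complex \<Rightarrow> 'a" where
  "pu f z = vector_derivative (\<lambda>t::real. f (z + of_real t)) (at 0)"

definition pv :: "(complex \<Rightarrow> 'a::real_normed_vector) \<Rightarrow> complex \<Rightarrow> 'a" where
  "pv f z = vector_derivative (\<lambda>t::real. f (z + \<i> * of_real t)) (at 0)"

definition C1_on :: "complex set \<Rightarrow> (complex \<Rightarrow> 'a::real_normed_vector) \<Rightarrow> bool" where
  "C1_on S f \<longleftrightarrow>
     (\<forall>z\<in>S. (\<lambda>t::real. f (z + of_real t)) differentiable (at 0)
          \<and> (\<lambda>t::real. f (z + \<i> * of_real t)) differentiable (at 0))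
     \<and> continuous_on S f \<and> continuous_on S (pu f) \<and> continuous_on S (pv f)"

definition C2_on :: "complex set \<Rightarrow> (complex \<Rightarrow> 'a::real_normed_vector) \<Rightarrow> bool" where
  "C2_on S f \<longleftrightarrow> C1_on S f \<and> C1_on S (pu f) \<and> C1_on S (pv f)"

definition dz :: "(complex \<Rightarrow> complex) \<Rightarrow> complex \<Rightarrow> complex" where
  "dz f z = (pu f z - \<i> * pv f z) / 2"

definition dzb :: "(complex \<Rightarrow> complex) \<Rightarrow> complex \<Rightarrow> complex" where
  "dzb f z = (pu f z + \<i> * pv f z) / 2"

definition weierstrass_data2 ::
  "complex set \<Rightarrow> (complex \<Rightarrow> complex) \<Rightarrow> (complex \<Rightarrow> real) \<Rightarrow> (complex \<Rightarrow> real) \<Rightarrow> bool" where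
  "weierstrass_data2 \<Omega> h M N \<longleftrightarrow>
     (\<forall>z\<in>\<Omega>. h z \<noteq> 0) \<and> C2_on \<Omega> h \<and> C2_on \<Omega> M \<and> C2_on \<Omega> N
     \<and> (\<forall>z\<in>\<Omega>. dzb h z = 0)
     \<and> (\<forall>z\<in>\<Omega>. dz (dzb (\<lambda>w. complex_of_real (M w))) z
               = complex_of_real (Re (h z)) * dz (dzb (\<lambda>w. complex_of_real (N w))) z)
     \<and> (\<forall>z\<in>\<Omega>. dz (\<lambda>w. complex_of_real (M w)) z
               - complex_of_real (Re (h z)) * dz (\<lambda>w. complex_of_real (N w)) z \<noteq> 0)"

text \<open>Vectors of R^4 / C^4; the four coordinates x1,x2,x3,x4 are the indices 1,2,3,4 of type 4
  (4 = 0 in the numeral type, which is the fourth distinct index).\<close>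
definition vec4 :: "'a \<Rightarrow> 'a \<Rightarrow> 'a \<Rightarrow> 'a \<Rightarrow> 'a ^ 4" where
  "vec4 a b c d = (\<chi> i. if i = 1 then a else if i = 2 then b else if i = 3 then c else d)"

definition lorentz :: "real ^ 4 \<Rightarrow> real ^ 4 \<Rightarrow> real" where
  "lorentz x y = x$1 * y$1 + x$2 * y$2 + x$3 * y$3 - x$4 * y$4"

definition dz_vec :: "(complex \<Rightarrow> real ^ 4) \<Rightarrow> complex \<Rightarrow> complex ^ 4" where
  "dz_vec X z = (\<chi> k. dz (\<lambda>w. complex_of_real (X w $ k)) z)"

definition conformal_spacelike_immersion ::
  "complex set \<Rightarrow> (complex \<Rightarrow> real ^ 4) \<Rightarrow> (complex \<Rightarrow> real) \<Rightarrow> bool" where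
  "conformal_spacelike_immersion \<Omega> X \<Lambda> \<longleftrightarrow>
     (\<forall>z\<in>\<Omega>. X differentiable (at z)) \<and> C2_on \<Omega> X
     \<and> (\<forall>z\<in>\<Omega>. \<Lambda> z > 0
          \<and> lorentz (pu X z) (pu X z) = \<Lambda> z
          \<and> lorentz (pv X z) (pv X z) = \<Lambda> z
          \<and> lorentz (pu X z) (pv X z) = 0)"

definition mean_curvature :: "(complex \<Rightarrow> real ^ 4) \<Rightarrow> (complex \<Rightarrow> real) \<Rightarrow> complex \<Rightarrow> real ^ 4" where
  "mean_curvature X \<Lambda> z = (1 / \<Lambda> z) *\<^sub>R (pu (pu X) z + pv (pv X) z)"

definition hfun :: "complex \<Rightarrow> complex" where
  "hfun z = exp (\<i> * z)"

definition Mth :: "real \<Rightarrow> complex \<Rightarrow> real" where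
  "Mth \<theta> z = cos \<theta> * sinh (Re z) * sin (Re z) - sin \<theta> * cos (Re z) * cos (Im z)"

definition Nth :: "real \<Rightarrow> complex \<Rightarrow> real" where
  "Nth \<theta> z = exp (Im z) * (cos \<theta> * cosh (Re z) + sin \<theta> * sin (Im z))"

definition X0 :: "complex \<Rightarrow> real ^ 4" where
  "X0 z = vec4 (sinh (Re z) * sin (Re z)) (sinh (Re z) * cos (Re z))
               (cosh (Re z) * sinh (Im z)) (cosh (Re z) * cosh (Im z))"

definition Xpi2 :: "complex \<Rightarrow> real ^ 4" where
  "Xpi2 z = vec4 (- cos (Re z) * cos (Im z)) (sin (Re z) * cos (Im z))
                 (cosh (Im z) * sin (Im z)) (sinh (Im z) * sin (Im z))"

definition Xth :: "real \<Rightarrow> complex \<Rightarrow> real ^ 4" where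
  "Xth \<theta> z = cos \<theta> *\<^sub>R X0 z + sin \<theta> *\<^sub>R Xpi2 z"

definition Lam :: "real \<Rightarrow> complex \<Rightarrow> real" where
  "Lam \<theta> z = (cos \<theta> * cosh (Re z) + sin \<theta> * cos (Im z))\<^sup>2"

end

theory Submission
  imports Defs
begin

text \<open>All objects are explicit expressions in \<open>cos\<close>, \<open>sin\<close>, \<open>cosh\<close>, \<open>sinh\<close> of
  \<open>u\<close> and \<open>v\<close>, so every claim reduces to computing partial derivatives and checking a
  polynomial identity modulo \<open>sin\<^sup>2 + cos\<^sup>2 = 1\<close> and \<open>cosh\<^sup>2 - sinh\<^sup>2 = 1\<close>.
  With \<open>l = cos \<theta> cosh u + sin \<theta> cos v\<close>, the key facts are that \<open>dz (dzb f)\<close> is a quarter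
  of the Laplacian, that \<open>M\<^sub>z - (Re h) N\<^sub>z = (l/2)(sin u + i cos u)\<close>, and that
  \<open>\<Delta>X = 2l (cos u, -sin u, sinh v, cosh v)\<close>, a null vector with positive last
  coordinate; hence the mean curvature \<open>\<Delta>X / l\<^sup>2\<close> is null and nowhere zero.\<close>

definition has_partials ::
  "(complex \<Rightarrow> 'a::real_normed_vector) \<Rightarrow> (complex \<Rightarrow> 'a) \<Rightarrow> (complex \<Rightarrow> 'a) \<Rightarrow> bool" where
  "has_partials f fu fv \<longleftrightarrow> (\<forall>z. (f has_derivative (\<lambda>w. Re w *\<^sub>R fu z + Im w *\<^sub>R fv z)) (at z))"

lemma has_partials_line_u:
  assumes "has_partials f fu fv"
  shows "((\<lambda>t::real. f (z + of_real t)) has_vector_derivative fu z) (at 0)"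
proof -
  have "((\<lambda>t::real. z + of_real t) has_derivative of_real) (at 0)"
    by (auto intro!: derivative_eq_intros)
  moreover have "(f has_derivative (\<lambda>w. Re w *\<^sub>R fu z + Im w *\<^sub>R fv z)) (at (z + of_real 0))"
    using assms unfolding has_partials_def by simp
  ultimately show ?thesis
    unfolding has_vector_derivative_def by (rule has_derivative_compose[THEN has_derivative_eq_rhs]) auto
qed

lemma has_partials_line_v:
  assumes "has_partials f fu fv"
  shows "((\<lambda>t::real. f (z + \<i> * of_real t)) has_vector_derivative fv z) (at 0)"
proof -
  have "((\<lambda>t::real. z + \<i> * of_real t) has_derivative (\<lambda>t. \<i> * of_real t)) (at 0)"
    by (auto intro!: derivative_eq_intros)
  moreover have "(f has_derivative (\<lambda>w. Re w *\<^sub>R fu z + Im w *\<^sub>R fv z)) (at (z + \<i> * of_real 0))"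
    using assms unfolding has_partials_def by simp
  ultimately show ?thesis
    unfolding has_vector_derivative_def by (rule has_derivative_compose[THEN has_derivative_eq_rhs]) auto
qed

lemma pu_eq: "has_partials f fu fv \<Longrightarrow> pu f = fu"
  unfolding pu_def by (rule ext, rule vector_derivative_at, erule has_partials_line_u)

lemma pv_eq: "has_partials f fu fv \<Longrightarrow> pv f = fv"
  unfolding pv_def by (rule ext, rule vector_derivative_at, erule has_partials_line_v)

lemma has_partials_differentiable: "has_partials f fu fv \<Longrightarrow> f differentiable (at z)"
  unfolding has_partials_def differentiable_def by blast

lemma has_partials_continuous_on: "has_partials f fu fv \<Longrightarrow> continuous_on S f"
  by (meson continuous_at_imp_continuous_on differentiable_imp_continuous_within
      has_partials_differentiable)

lemma C1_on_has_partials: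
  assumes "has_partials f fu fv" "continuous_on S fu" "continuous_on S fv"
  shows "C1_on S f"
  unfolding C1_on_def pu_eq[OF assms(1)] pv_eq[OF assms(1)]
  using has_partials_line_u[OF assms(1)] has_partials_line_v[OF assms(1)]
    has_partials_continuous_on[OF assms(1)] assms(2,3)
  by (auto simp: differentiable_def has_vector_derivative_def)

lemma C2_on_has_partials:
  assumes "has_partials f fu fv" "has_partials fu fuu fuv" "has_partials fv fuv fvv"
    and "continuous_on S fuu" "continuous_on S fuv" "continuous_on S fvv"
  shows "C2_on S f"
  unfolding C2_on_def pu_eq[OF assms(1)] pv_eq[OF assms(1)]
  using assms by (meson C1_on_has_partials has_partials_continuous_on)

lemma has_partials_add:
  "has_partials f fu fv \<Longrightarrow> has_partials g gu gv \<Longrightarrow>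
    has_partials (\<lambda>z. f z + g z) (\<lambda>z. fu z + gu z) (\<lambda>z. fv z + gv z)"
  unfolding has_partials_def by (auto intro!: derivative_eq_intros simp: algebra_simps)

lemma has_partials_mult_left:
  fixes f :: "complex \<Rightarrow> complex"
  shows "has_partials f fu fv \<Longrightarrow> has_partials (\<lambda>z. c * f z) (\<lambda>z. c * fu z) (\<lambda>z. c * fv z)"
  unfolding has_partials_def
  by (auto intro!: derivative_eq_intros simp: algebra_simps scaleR_conv_of_real)

lemma has_partials_of_real:
  "has_partials f fu fv \<Longrightarrow>
    has_partials (\<lambda>z. complex_of_real (f z)) (\<lambda>z. of_real (fu z)) (\<lambda>z. of_real (fv z))"
  unfolding has_partials_def
  by (auto intro!: derivative_eq_intros simp: algebra_simps scaleR_conv_of_real)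

lemma has_partials_vec_nth:
  "has_partials f fu fv \<Longrightarrow> has_partials (\<lambda>z. f z $ k) (\<lambda>z. fu z $ k) (\<lambda>z. fv z $ k)"
  unfolding has_partials_def
  using bounded_linear.has_derivative[OF bounded_linear_vec_nth] by fastforce

lemma has_partials_holomorphic:
  assumes "\<And>z. (f has_field_derivative f' z) (at z)"
  shows "has_partials f f' (\<lambda>z. \<i> * f' z)"
  unfolding has_partials_def
proof
  fix z
  have "(*) (f' z) = (\<lambda>w. Re w *\<^sub>R f' z + Im w *\<^sub>R (\<i> * f' z))"
    by (auto simp: fun_eq_iff complex_eq_iff)
  then show "(f has_derivative (\<lambda>w. Re w *\<^sub>R f' z + Im w *\<^sub>R (\<i> * f' z))) (at z)"
    using assms[of z] by (simp add: has_field_derivative_def)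
qed

lemma dz_eq: "has_partials f fu fv \<Longrightarrow> dz f z = (fu z - \<i> * fv z) / 2"
  unfolding dz_def by (simp add: pu_eq pv_eq)

lemma dzb_eq: "has_partials f fu fv \<Longrightarrow> dzb f z = (fu z + \<i> * fv z) / 2"
  unfolding dzb_def by (simp add: pu_eq pv_eq)

lemma dz_dzb_eq_Laplacian:
  assumes "has_partials f fu fv" "has_partials fu fuu fuv" "has_partials fv fuv fvv"
  shows "dz (dzb f) z = (fuu z + fvv z) / 4"
proof -
  have "dzb f = (\<lambda>z. (1/2) * fu z + (\<i>/2) * fv z)"
    using dzb_eq[OF assms(1)] by (auto simp: fun_eq_iff field_simps)
  moreover have "has_partials (\<lambda>z. (1/2) * fu z + (\<i>/2) * fv z)
      (\<lambda>z. (1/2) * fuu z + (\<i>/2) * fuv z) (\<lambda>z. (1/2) * fuv z + (\<i>/2) * fvv z)"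
    by (intro has_partials_add has_partials_mult_left assms(2,3))
  ultimately show ?thesis
    by (simp add: dz_eq field_simps)
qed

lemma vec4_nth [simp]:
  "vec4 a b c d $ 1 = a" "vec4 a b c d $ 2 = b" "vec4 a b c d $ 3 = c" "vec4 a b c d $ 4 = d"
  unfolding vec4_def by simp_all

lemma vec4_eq_iff: "vec4 a b c d = vec4 a' b' c' d' \<longleftrightarrow> a = a' \<and> b = b' \<and> c = c' \<and> d = d'"
  by (auto simp: vec_eq_iff forall_4)

lemma vec4_add: "vec4 a b c d + vec4 a' b' c' d' = vec4 (a + a') (b + b') (c + c') (d + d')"
  by (simp add: vec_eq_iff forall_4)

lemma vec4_scaleR: "r *\<^sub>R vec4 a b c d = vec4 (r * a) (r * b) (r * c) (r * d)"
  by (simp add: vec_eq_iff forall_4)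

lemma vec4_eq_sum_basis:
  "vec4 a b c d = a *\<^sub>R vec4 1 0 0 0 + b *\<^sub>R vec4 0 1 0 0 + c *\<^sub>R vec4 0 0 1 0 + d *\<^sub>R vec4 0 0 0 1"
  by (simp add: vec_eq_iff forall_4)

lemma has_derivative_vec4 [derivative_intros]:
  fixes f1 f2 f3 f4 :: "'a::real_normed_vector \<Rightarrow> real"
  assumes "(f1 has_derivative f1') F" "(f2 has_derivative f2') F"
    and "(f3 has_derivative f3') F" "(f4 has_derivative f4') F"
  shows "((\<lambda>x. vec4 (f1 x) (f2 x) (f3 x) (f4 x)) has_derivative
           (\<lambda>h. vec4 (f1' h) (f2' h) (f3' h) (f4' h))) F"
  unfolding vec4_eq_sum_basis[of "f1 _"] vec4_eq_sum_basis[of "f1' _"]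
  by (intro derivative_intros assms)

lemma continuous_on_vec4 [continuous_intros]:
  fixes f1 f2 f3 f4 :: "'a::topological_space \<Rightarrow> real"
  assumes "continuous_on S f1" "continuous_on S f2" "continuous_on S f3" "continuous_on S f4"
  shows "continuous_on S (\<lambda>x. vec4 (f1 x) (f2 x) (f3 x) (f4 x))"
  unfolding vec4_eq_sum_basis[of "f1 _"] by (intro continuous_intros assms)

lemma lorentz_vec4: "lorentz (vec4 a b c d) (vec4 a' b' c' d') = a * a' + b * b' + c * c' - d * d'"
  by (simp add: lorentz_def)

lemmas has_derivative_sinh_real [derivative_intros] =
  has_field_derivative_sinh[of "\<lambda>x. x", OF DERIV_ident, THEN DERIV_compose_FDERIV]
lemmas has_derivative_cosh_real [derivative_intros] =
  has_field_derivative_cosh[of "\<lambda>x. x", OF DERIV_ident, THEN DERIV_compose_FDERIV]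

lemma has_partials_hfun: "has_partials hfun (\<lambda>z. \<i> * hfun z) (\<lambda>z. - hfun z)"
proof -
  have "(hfun has_field_derivative \<i> * hfun z) (at z)" for z
    unfolding hfun_def by (auto intro!: derivative_eq_intros)
  then show ?thesis
    using has_partials_holomorphic[of hfun "\<lambda>z. \<i> * hfun z"] by simp
qed

lemma C2_on_hfun: "C2_on S hfun"
proof (rule C2_on_has_partials[OF has_partials_hfun])
  show "has_partials (\<lambda>z. \<i> * hfun z) (\<lambda>z. - hfun z) (\<lambda>z. - (\<i> * hfun z))"
    using has_partials_mult_left[OF has_partials_hfun, of \<i>] by simp
  show "has_partials (\<lambda>z. - hfun z) (\<lambda>z. - (\<i> * hfun z)) (\<lambda>z. hfun z)"
    using has_partials_mult_left[OF has_partials_hfun, of "-1"] by simp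
qed (auto simp: hfun_def intro!: continuous_intros)

lemma hfun_eq: "hfun z = complex_of_real (cosh (Im z) - sinh (Im z)) * cis (Re z)"
  by (simp add: hfun_def cosh_minus_sinh complex_eq_iff Re_exp Im_exp)

definition Mth_u :: "real \<Rightarrow> complex \<Rightarrow> real" where
  "Mth_u \<theta> z = cos \<theta> * (cosh (Re z) * sin (Re z) + sinh (Re z) * cos (Re z))
                 + sin \<theta> * sin (Re z) * cos (Im z)"

definition Mth_v :: "real \<Rightarrow> complex \<Rightarrow> real" where
  "Mth_v \<theta> z = sin \<theta> * cos (Re z) * sin (Im z)"

lemma has_partials_Mth: "has_partials (Mth \<theta>) (Mth_u \<theta>) (Mth_v \<theta>)"
  unfolding has_partials_def Mth_def Mth_u_def Mth_v_def
  by (auto intro!: derivative_eq_intros simp: algebra_simps)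

lemma has_partials_Mth_u:
  "has_partials (Mth_u \<theta>)
     (\<lambda>z. 2 * cos \<theta> * cosh (Re z) * cos (Re z) + sin \<theta> * cos (Re z) * cos (Im z))
     (\<lambda>z. - sin \<theta> * sin (Re z) * sin (Im z))"
  unfolding has_partials_def Mth_u_def
  by (auto intro!: derivative_eq_intros simp: algebra_simps)

lemma has_partials_Mth_v:
  "has_partials (Mth_v \<theta>)
     (\<lambda>z. - sin \<theta> * sin (Re z) * sin (Im z)) (\<lambda>z. sin \<theta> * cos (Re z) * cos (Im z))"
  unfolding has_partials_def Mth_v_def
  by (auto intro!: derivative_eq_intros simp: algebra_simps)

definition Nth_u :: "real \<Rightarrow> complex \<Rightarrow> real" where
  "Nth_u \<theta> z = exp (Im z) * cos \<theta> * sinh (Re z)"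

definition Nth_v :: "real \<Rightarrow> complex \<Rightarrow> real" where
  "Nth_v \<theta> z = exp (Im z) * (cos \<theta> * cosh (Re z) + sin \<theta> * sin (Im z) + sin \<theta> * cos (Im z))"

lemma has_partials_Nth: "has_partials (Nth \<theta>) (Nth_u \<theta>) (Nth_v \<theta>)"
  unfolding has_partials_def Nth_def Nth_u_def Nth_v_def
  by (auto intro!: derivative_eq_intros simp: algebra_simps)

lemma has_partials_Nth_u:
  "has_partials (Nth_u \<theta>)
     (\<lambda>z. exp (Im z) * cos \<theta> * cosh (Re z)) (\<lambda>z. exp (Im z) * cos \<theta> * sinh (Re z))"
  unfolding has_partials_def Nth_u_def
  by (auto intro!: derivative_eq_intros simp: algebra_simps)

lemma has_partials_Nth_v:
  "has_partials (Nth_v \<theta>)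
     (\<lambda>z. exp (Im z) * cos \<theta> * sinh (Re z))
     (\<lambda>z. exp (Im z) * (cos \<theta> * cosh (Re z) + 2 * sin \<theta> * cos (Im z)))"
  unfolding has_partials_def Nth_v_def
  by (auto intro!: derivative_eq_intros simp: algebra_simps)

lemma C2_on_Mth: "C2_on S (Mth \<theta>)"
  by (rule C2_on_has_partials[OF has_partials_Mth has_partials_Mth_u has_partials_Mth_v])
     (intro continuous_intros)+

lemma C2_on_Nth: "C2_on S (Nth \<theta>)"
  by (rule C2_on_has_partials[OF has_partials_Nth has_partials_Nth_u has_partials_Nth_v])
     (intro continuous_intros)+

lemma Re_hfun: "Re (hfun z) = exp (- Im z) * cos (Re z)"
  by (simp add: hfun_def Re_exp)

lemma Laplacian_Mth_eq:
  "dz (dzb (\<lambda>w. complex_of_real (Mth \<theta> w))) z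
     = complex_of_real (Re (hfun z)) * dz (dzb (\<lambda>w. complex_of_real (Nth \<theta> w))) z"
proof -
  have "2 * cos \<theta> * cosh (Re z) * cos (Re z) + sin \<theta> * cos (Re z) * cos (Im z)
          + sin \<theta> * cos (Re z) * cos (Im z)
        = Re (hfun z) * (exp (Im z) * cos \<theta> * cosh (Re z)
          + exp (Im z) * (cos \<theta> * cosh (Re z) + 2 * sin \<theta> * cos (Im z)))"
    unfolding Re_hfun using exp_minus_inverse[of "Im z"] by algebra
  then show ?thesis
    by (simp add: dz_dzb_eq_Laplacian[OF has_partials_of_real[OF has_partials_Mth]
          has_partials_of_real[OF has_partials_Mth_u] has_partials_of_real[OF has_partials_Mth_v]]
        dz_dzb_eq_Laplacian[OF has_partials_of_real[OF has_partials_Nth]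
          has_partials_of_real[OF has_partials_Nth_u] has_partials_of_real[OF has_partials_Nth_v]]
        flip: of_real_add of_real_mult)
qed

lemma dz_Mth_minus_Re_hfun_dz_Nth:
  "dz (\<lambda>w. complex_of_real (Mth \<theta> w)) z
     - complex_of_real (Re (hfun z)) * dz (\<lambda>w. complex_of_real (Nth \<theta> w)) z
   = complex_of_real ((cos \<theta> * cosh (Re z) + sin \<theta> * cos (Im z)) / 2)
       * (complex_of_real (sin (Re z)) + \<i> * complex_of_real (cos (Re z)))"
  unfolding dz_eq[OF has_partials_of_real[OF has_partials_Mth]]
    dz_eq[OF has_partials_of_real[OF has_partials_Nth]]
    Re_hfun Mth_u_def Mth_v_def Nth_u_def Nth_v_def
  using exp_minus_inverse[of "Im z"] by (simp add: complex_eq_iff) algebra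

lemma weierstrass_data2_hfun_Mth_Nth:
  assumes "\<forall>z\<in>\<Omega>. cos \<theta> * cosh (Re z) + sin \<theta> * cos (Im z) \<noteq> 0"
  shows "weierstrass_data2 \<Omega> hfun (Mth \<theta>) (Nth \<theta>)"
  unfolding weierstrass_data2_def
proof (intro conjI ballI C2_on_hfun C2_on_Mth C2_on_Nth Laplacian_Mth_eq)
  fix z assume "z \<in> \<Omega>"
  have "complex_of_real (sin (Re z)) + \<i> * complex_of_real (cos (Re z)) \<noteq> 0"
    using sin_zero_norm_cos_one[of "Re z"] by (auto simp: complex_eq_iff)
  with assms \<open>z \<in> \<Omega>\<close> show "dz (\<lambda>w. complex_of_real (Mth \<theta> w)) z
      - complex_of_real (Re (hfun z)) * dz (\<lambda>w. complex_of_real (Nth \<theta> w)) z \<noteq> 0"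
    unfolding dz_Mth_minus_Re_hfun_dz_Nth by (simp del: of_real_add of_real_mult)
qed (simp_all add: hfun_def dzb_eq[OF has_partials_hfun])

lemma Xth_vec4:
  "Xth \<theta> z = vec4
     (cos \<theta> * sinh (Re z) * sin (Re z) - sin \<theta> * cos (Re z) * cos (Im z))
     (cos \<theta> * sinh (Re z) * cos (Re z) + sin \<theta> * sin (Re z) * cos (Im z))
     (cos \<theta> * cosh (Re z) * sinh (Im z) + sin \<theta> * cosh (Im z) * sin (Im z))
     (cos \<theta> * cosh (Re z) * cosh (Im z) + sin \<theta> * sinh (Im z) * sin (Im z))"
  by (simp add: Xth_def X0_def Xpi2_def vec4_scaleR vec4_add mult.assoc)

definition Xth_u :: "real \<Rightarrow> complex \<Rightarrow> real ^ 4" where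
  "Xth_u \<theta> z = vec4
     (cos \<theta> * (cosh (Re z) * sin (Re z) + sinh (Re z) * cos (Re z)) + sin \<theta> * sin (Re z) * cos (Im z))
     (cos \<theta> * (cosh (Re z) * cos (Re z) - sinh (Re z) * sin (Re z)) + sin \<theta> * cos (Re z) * cos (Im z))
     (cos \<theta> * sinh (Re z) * sinh (Im z))
     (cos \<theta> * sinh (Re z) * cosh (Im z))"

definition Xth_v :: "real \<Rightarrow> complex \<Rightarrow> real ^ 4" where
  "Xth_v \<theta> z = vec4
     (sin \<theta> * cos (Re z) * sin (Im z))
     (- sin \<theta> * sin (Re z) * sin (Im z))
     (cos \<theta> * cosh (Re z) * cosh (Im z) + sin \<theta> * (sinh (Im z) * sin (Im z) + cosh (Im z) * cos (Im z)))
     (cos \<theta> * cosh (Re z) * sinh (Im z) + sin \<theta> * (cosh (Im z) * sin (Im z) + sinh (Im z) * cos (Im z)))"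

lemma has_partials_Xth: "has_partials (Xth \<theta>) (Xth_u \<theta>) (Xth_v \<theta>)"
  unfolding has_partials_def Xth_vec4[abs_def] Xth_u_def Xth_v_def
  by (auto intro!: derivative_eq_intros simp: fun_eq_iff vec4_scaleR vec4_add vec4_eq_iff algebra_simps)

lemma has_partials_Xth_u:
  "has_partials (Xth_u \<theta>)
     (\<lambda>z. vec4
       (2 * cos \<theta> * cosh (Re z) * cos (Re z) + sin \<theta> * cos (Re z) * cos (Im z))
       (- 2 * cos \<theta> * cosh (Re z) * sin (Re z) - sin \<theta> * sin (Re z) * cos (Im z))
       (cos \<theta> * cosh (Re z) * sinh (Im z))
       (cos \<theta> * cosh (Re z) * cosh (Im z)))
     (\<lambda>z. vec4
       (- sin \<theta> * sin (Re z) * sin (Im z))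
       (- sin \<theta> * cos (Re z) * sin (Im z))
       (cos \<theta> * sinh (Re z) * cosh (Im z))
       (cos \<theta> * sinh (Re z) * sinh (Im z)))"
  unfolding has_partials_def Xth_u_def
  by (auto intro!: derivative_eq_intros simp: fun_eq_iff vec4_scaleR vec4_add vec4_eq_iff algebra_simps)

lemma has_partials_Xth_v:
  "has_partials (Xth_v \<theta>)
     (\<lambda>z. vec4
       (- sin \<theta> * sin (Re z) * sin (Im z))
       (- sin \<theta> * cos (Re z) * sin (Im z))
       (cos \<theta> * sinh (Re z) * cosh (Im z))
       (cos \<theta> * sinh (Re z) * sinh (Im z)))
     (\<lambda>z. vec4
       (sin \<theta> * cos (Re z) * cos (Im z))
       (- sin \<theta> * sin (Re z) * cos (Im z))
       (cos \<theta> * cosh (Re z) * sinh (Im z) + 2 * sin \<theta> * sinh (Im z) * cos (Im z))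
       (cos \<theta> * cosh (Re z) * cosh (Im z) + 2 * sin \<theta> * cosh (Im z) * cos (Im z)))"
  unfolding has_partials_def Xth_v_def
  by (auto intro!: derivative_eq_intros simp: fun_eq_iff vec4_scaleR vec4_add vec4_eq_iff algebra_simps)

lemma C2_on_Xth: "C2_on S (Xth \<theta>)"
  by (rule C2_on_has_partials[OF has_partials_Xth has_partials_Xth_u has_partials_Xth_v])
     (intro continuous_intros)+

lemma lorentz_Xth_u: "lorentz (Xth_u \<theta> z) (Xth_u \<theta> z) = Lam \<theta> z"
  unfolding Xth_u_def Lam_def lorentz_vec4
  using sin_cos_squared_add[of "Re z"] cosh_square_eq[of "Re z"] cosh_square_eq[of "Im z"]
  by algebra

lemma lorentz_Xth_v: "lorentz (Xth_v \<theta> z) (Xth_v \<theta> z) = Lam \<theta> z"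
  unfolding Xth_v_def Lam_def lorentz_vec4
  using sin_cos_squared_add[of "Re z"] sin_cos_squared_add[of "Im z"] cosh_square_eq[of "Im z"]
  by algebra

lemma lorentz_Xth_u_Xth_v: "lorentz (Xth_u \<theta> z) (Xth_v \<theta> z) = 0"
  unfolding Xth_u_def Xth_v_def lorentz_vec4
  using sin_cos_squared_add[of "Re z"] cosh_square_eq[of "Im z"] by algebra

lemma conformal_spacelike_immersion_Xth:
  assumes "\<forall>z\<in>\<Omega>. cos \<theta> * cosh (Re z) + sin \<theta> * cos (Im z) \<noteq> 0"
  shows "conformal_spacelike_immersion \<Omega> (Xth \<theta>) (Lam \<theta>)"
  unfolding conformal_spacelike_immersion_def pu_eq[OF has_partials_Xth] pv_eq[OF has_partials_Xth]
  using assms by (auto simp: Lam_def lorentz_Xth_u lorentz_Xth_v lorentz_Xth_u_Xth_v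
      C2_on_Xth has_partials_differentiable[OF has_partials_Xth])

lemma Laplacian_Xth:
  "pu (pu (Xth \<theta>)) z + pv (pv (Xth \<theta>)) z
     = (2 * (cos \<theta> * cosh (Re z) + sin \<theta> * cos (Im z)))
         *\<^sub>R vec4 (cos (Re z)) (- sin (Re z)) (sinh (Im z)) (cosh (Im z))"
  unfolding pu_eq[OF has_partials_Xth] pv_eq[OF has_partials_Xth]
    pu_eq[OF has_partials_Xth_u] pv_eq[OF has_partials_Xth_v]
  by (simp add: vec4_add vec4_scaleR vec4_eq_iff algebra_simps)

lemma mean_curvature_Xth:
  "mean_curvature (Xth \<theta>) (Lam \<theta>) z
     = (2 / (cos \<theta> * cosh (Re z) + sin \<theta> * cos (Im z)))
         *\<^sub>R vec4 (cos (Re z)) (- sin (Re z)) (sinh (Im z)) (cosh (Im z))"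
proof -
  have "1 / l\<^sup>2 * (2 * l) = 2 / l" for l :: real
    by (cases "l = 0") (simp_all add: power2_eq_square)
  then show ?thesis
    unfolding mean_curvature_def Laplacian_Xth Lam_def scaleR_scaleR by (simp only:)
qed

lemma lorentz_mean_curvature_Xth:
  "lorentz (mean_curvature (Xth \<theta>) (Lam \<theta>) z) (mean_curvature (Xth \<theta>) (Lam \<theta>) z) = 0"
  unfolding mean_curvature_Xth vec4_scaleR lorentz_vec4
  using sin_cos_squared_add[of "Re z"] cosh_square_eq[of "Im z"] by algebra

lemma mean_curvature_Xth_nonzero:
  assumes "cos \<theta> * cosh (Re z) + sin \<theta> * cos (Im z) \<noteq> 0"
  shows "mean_curvature (Xth \<theta>) (Lam \<theta>) z \<noteq> 0"
proof -
  have "mean_curvature (Xth \<theta>) (Lam \<theta>) z $ 4 \<noteq> 0"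
    using assms unfolding mean_curvature_Xth by simp
  then show ?thesis by auto
qed

lemma lorentz_Xth: "lorentz (Xth \<theta> z) (Xth \<theta> z) = - cos (2 * \<theta>)"
  unfolding Xth_vec4 lorentz_vec4 cos_double
  using sin_cos_squared_add[of \<theta>] sin_cos_squared_add[of "Re z"] sin_cos_squared_add[of "Im z"]
    cosh_square_eq[of "Re z"] cosh_square_eq[of "Im z"]
  by algebra

lemma dz_vec_Xth:
  "dz_vec (Xth \<theta>) z
     = dz (\<lambda>w. complex_of_real (Mth \<theta> w)) z *s vec4 1 (- \<i>) (- hfun z) (hfun z)
       + dz (\<lambda>w. complex_of_real (Nth \<theta> w)) z
           *s vec4 0 (\<i> * hfun z) ((1 + (hfun z)\<^sup>2) / 2) ((1 - (hfun z)\<^sup>2) / 2)"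
proof -
  have components: "dz_vec (Xth \<theta>) z $ k
      = (complex_of_real (Xth_u \<theta> z $ k) - \<i> * complex_of_real (Xth_v \<theta> z $ k)) / 2" for k
    unfolding dz_vec_def
    by (simp add: dz_eq[OF has_partials_of_real[OF has_partials_vec_nth[OF has_partials_Xth]]])
  have "exp (Im z) = cosh (Im z) + sinh (Im z)"
    by (simp add: cosh_plus_sinh)
  then show ?thesis
    unfolding vec_eq_iff forall_4 components vector_add_component vector_smult_component vec4_nth
      dz_eq[OF has_partials_of_real[OF has_partials_Mth]] dz_eq[OF has_partials_of_real[OF has_partials_Nth]]
      hfun_eq Xth_u_def Xth_v_def Mth_u_def Mth_v_def Nth_u_def Nth_v_def
    using sin_cos_squared_add[of "Re z"] sin_cos_squared_add[of "Im z"] cosh_square_eq[of "Im z"]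
    by (simp add: complex_eq_iff power2_eq_square cis.sel) algebra
qed

theorem mainTheorem11:
  fixes \<theta> :: real and \<Omega> :: "complex set"
  assumes "0 \<le> \<theta>" "\<theta> \<le> pi / 2"
    and "open \<Omega>" "simply_connected \<Omega>"
    and "\<forall>z\<in>\<Omega>. cos \<theta> * cosh (Re z) + sin \<theta> * cos (Im z) \<noteq> 0"
  shows "weierstrass_data2 \<Omega> hfun (Mth \<theta>) (Nth \<theta>)
    \<and> (\<forall>z\<in>\<Omega>. dz_vec (Xth \<theta>) z
          = dz (\<lambda>w. complex_of_real (Mth \<theta> w)) z *s vec4 1 (- \<i>) (- hfun z) (hfun z)
            + dz (\<lambda>w. complex_of_real (Nth \<theta> w)) z
                *s vec4 0 (\<i> * hfun z) ((1 + (hfun z)\<^sup>2) / 2) ((1 - (hfun z)\<^sup>2) / 2))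
    \<and> conformal_spacelike_immersion \<Omega> (Xth \<theta>) (Lam \<theta>)
    \<and> (\<forall>z\<in>\<Omega>. lorentz (mean_curvature (Xth \<theta>) (Lam \<theta>) z) (mean_curvature (Xth \<theta>) (Lam \<theta>) z) = 0
              \<and> mean_curvature (Xth \<theta>) (Lam \<theta>) z \<noteq> 0)
    \<and> (\<forall>z\<in>\<Omega>. lorentz (Xth \<theta> z) (Xth \<theta> z) = - cos (2 * \<theta>))"
  using assms(5)
  by (simp add: weierstrass_data2_hfun_Mth_Nth dz_vec_Xth conformal_spacelike_immersion_Xth
      lorentz_mean_curvature_Xth mean_curvature_Xth_nonzero lorentz_Xth)

end
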